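(* Let $\Delta t_n>0$, $\mathbf u^{n-1}\in W^{\rm en}_{\mathcal D}$, and let $\mathbf u^n\in W^{\rm ad}_{\mathcal D}$ be a solution of the scheme $$\int_\Omega\pi_{\mathcal D}\mathbf u^n\pi_{\mathcal D}\mathbf v\,dx+\Delta t_n\sum_{K\in\mathcal M}\boldsymbol\delta_K\mathbf h(\mathbf u^n)\cdot\mathbf B_K(\mathbf u^n)\boldsymbol\delta_K\mathbf v=\int_\Omega\pi_{\mathcal D}\mathbf u^{n-1}\pi_{\mathcal D}\mathbf v\,dx\quad\forall\mathbf v\in W_{\mathcal D}.$$ Then $$\mathcal E_{\mathcal D}(\mathbf u^n)+\Delta t_n\sum_{K\in\mathcal M}\boldsymbol\delta_K\mathbf h(\mathbf u^n)\cdot\mathbf B_K(\mathbf u^n)\boldsymbol\delta_K\mathbf h(\mathbf u^n)\le\mathcal E_{\mathcal D}(\mathbf u^{n-1}).$$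
   Context: Continuous data: $\Omega\subset\mathbb R^d$ ($d\in\{2,3\}$) connected bounded open polyhedral. (A1) $\eta:\mathbb R_+\to\mathbb R_+$ continuous, $\eta(0)=0$, $\eta>0$ on $u\ne0$, nondecreasing on $\mathbb R_+$, extended evenly. (A2) $p\in L^1_{loc}(\mathbb R_+)$ absolutely continuous, increasing on $(0,\infty)$, $p(u)\to+\infty$ as $u\to\infty$; if $p(0)=\lim_{u\downarrow0}p(u)$ is finite, $p(u)=2p(0)-p(-u)$ for $u\le0$; $I_p=(0,\infty)$ if $p(0)=-\infty$, else $\mathbb R$; $\sqrt\eta p'\in L^1_{loc}(\mathbb R_+)$, $\sqrt{\eta(u)}p(u)\to0$ as $u\downarrow0$. (A3) $\Lambda$ measurable, symmetric, uniformly elliptic and bounded. (A4) $\Gamma(u)=\int_1^u(p(a)-p(1))da$ on $\bar I_p$ ($+\infty$ for $u<0$ if $p(0)=-\infty$). (A5) $V$ Lipschitz. Mesh: cells $\mathcal M$ (disjoint open polyhedra covering $\bar\Omega$, star-shaped w.r.t. $x_K$), vertices $\mathcal V$ at $x_s$, $\mathcal V_K$, $\mathcal M_s$ as usual, simplicial submesh $\mathcal T$ (each cell split into simplices with apex $x_K$), $W_{\mathcal D}=\{\mathbf v=(v_K,v_s)\}$; $\pi_{\mathcal T}\mathbf v$ the continuous piecewise affine interpolant on $\mathcal T$ (values $v_K$ at $x_K$, $v_s$ at $x_s$, and at face centers $x_\sigma=\sum\beta_{\sigma,s}x_s$ when $d=3$ the value $\sum\beta_{\sigma,s}v_s$); $\nabla_{\mathcal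 T}=\nabla\pi_{\mathcal T}$; $\mathbf e_\beta$ unit vectors. Mass lumping: $\alpha_{K,s}\ge0$, $\sum_s\alpha_{K,s}\le1$, $m_{K,s}=\alpha_{K,s}|K|$, $m_s=\sum_{K\in\mathcal M_s}m_{K,s}$, $m_K=|K|-\sum_sm_{K,s}$, disjoint $\omega_K,\omega_{K,s}\subset K$ covering $K$ up to null sets with these measures, $\omega_s=\bigcup_K\omega_{K,s}$, $\pi_{\mathcal D}\mathbf v=\sum v_K\mathbf 1_{\omega_K}+\sum v_s\mathbf 1_{\omega_s}$. $a^K_{s,s'}=\int_K\Lambda\nabla_{\mathcal T}\mathbf e_s\cdot\nabla_{\mathcal T}\mathbf e_{s'}$, $\mathbf A_K=(a^K_{s,s'})_{s,s'\in\mathcal V_K}$, $\boldsymbol\delta_K\mathbf v=(v_K-v_s)_{s\in\mathcal V_K}$. Scheme: $\mathbf V=(V(x_K),V(x_s))$; $W^{\rm ad}_{\mathcal D}=\{\mathbf v:v_\nu\in I_p\ \forall\nu\}$; $\mathcal E_{\mathcal D}(\mathbf v)=\int_\Omega(\Gamma(\pi_{\mathcal D}\mathbf v)+\pi_{\mathcal D}\mathbf v\pi_{\mathcal D}\mathbf V)$; $W^{\rm en}_{\mathcal D}=\{\mathcal E_{\mathcal D}<\infty\}$; $\mathbf h(\mathbf u)=(p(u_\nu)+V_\nu)_{\nu\in\mathcal M\cup\mathcal V}$; $\eta_{K,s}(\mathbf u)=(\eta(u_K)+\eta(u_s))/2$; $\mathbf M_K(\mathbf u)=\operatorname{diag}(\sqrt{\eta_{K,s}(\mathbf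 u)})_{s\in\mathcal V_K}$; $\mathbf B_K(\mathbf u)=\mathbf M_K(\mathbf u)\mathbf A_K\mathbf M_K(\mathbf u)$. *)

theory Defs
  imports "HOL-Analysis.Analysis"
begin

definition polyhedral_open :: "'a::euclidean_space set \<Rightarrow> bool" where
  "polyhedral_open S \<longleftrightarrow> open S \<and>
     (\<exists>F. finite F \<and> (\<forall>P\<in>F. polytope P) \<and> S = interior (\<Union>F))"

definition abs_continuous_on :: "real set \<Rightarrow> (real \<Rightarrow> real) \<Rightarrow> bool" where
  "abs_continuous_on S f \<longleftrightarrow>
     (\<forall>\<epsilon>>0. \<exists>\<delta>>0. \<forall>(n::nat) (a::nat\<Rightarrow>real) b.
        (\<forall>i<n. a i \<in> S \<and> b i \<in> S \<and> a i \<le> b i) \<longrightarrow>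
        (\<forall>i<n. \<forall>j<n. i \<noteq> j \<longrightarrow> {a i<..<b i} \<inter> {a j<..<b j} = {}) \<longrightarrow>
        (\<Sum>i<n. b i - a i) < \<delta> \<longrightarrow> (\<Sum>i<n. \<bar>f (b i) - f (a i)\<bar>) < \<epsilon>)"

definition p_zero_infinite :: "(real \<Rightarrow> real) \<Rightarrow> bool" where
  "p_zero_infinite p \<longleftrightarrow> filterlim p at_bot (at_right 0)"

definition Ip :: "(real \<Rightarrow> real) \<Rightarrow> real set" where
  "Ip p = (if p_zero_infinite p then {0<..} else UNIV)"

definition Gamma :: "(real \<Rightarrow> real) \<Rightarrow> real \<Rightarrow> ereal" where
  "Gamma p u = (if u \<in> closure (Ip p)
      then ereal (interval_lebesgue_integral lborel (ereal 1) (ereal u) (\<lambda>a. p a - p 1))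
      else \<infinity>)"

text \<open>Degrees of freedom: cell unknowns Inl K, vertex unknowns Inr s.
  A vector v in W_D is a function on these indices.\<close>

definition Ms :: "'c set \<Rightarrow> ('c \<Rightarrow> 'v set) \<Rightarrow> 'v \<Rightarrow> 'c set" where
  "Ms M VK s = {K\<in>M. s \<in> VK K}"

definition omega_s ::
  "'c set \<Rightarrow> ('c \<Rightarrow> 'v set) \<Rightarrow> ('c \<Rightarrow> 'v \<Rightarrow> 'a set) \<Rightarrow> 'v \<Rightarrow> 'a set" where
  "omega_s M VK omKs s = (\<Union>K\<in>Ms M VK s. omKs K s)"

definition piD ::
  "'c set \<Rightarrow> 'v set \<Rightarrow> ('c \<Rightarrow> 'v set) \<Rightarrow> ('c \<Rightarrow> 'a set) \<Rightarrow> ('c \<Rightarrow> 'v \<Rightarrow> 'a set)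
    \<Rightarrow> ('c + 'v \<Rightarrow> real) \<Rightarrow> 'a \<Rightarrow> real" where
  "piD M Vs VK omK omKs v x =
     (\<Sum>K\<in>M. v (Inl K) * indicator (omK K) x) +
     (\<Sum>s\<in>Vs. v (Inr s) * indicator (omega_s M VK omKs s) x)"

definition energyD ::
  "(real \<Rightarrow> real) \<Rightarrow> 'a::euclidean_space set \<Rightarrow> (('c + 'v \<Rightarrow> real) \<Rightarrow> 'a \<Rightarrow> real)
    \<Rightarrow> ('c + 'v \<Rightarrow> real) \<Rightarrow> ('c + 'v \<Rightarrow> real) \<Rightarrow> ereal" where
  "energyD p \<Omega> recon VV v =
     enn2ereal (\<integral>\<^sup>+ x. e2ennreal (Gamma p (recon v x)) * indicator \<Omega> x \<partial>lebesgue)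
     + ereal (set_lebesgue_integral lebesgue \<Omega> (\<lambda>x. recon v x * recon VV x))"

definition hvec :: "(real \<Rightarrow> real) \<Rightarrow> ('c + 'v \<Rightarrow> real) \<Rightarrow> ('c + 'v \<Rightarrow> real) \<Rightarrow> ('c + 'v \<Rightarrow> real)" where
  "hvec p VV u = (\<lambda>\<nu>. p (u \<nu>) + VV \<nu>)"

definition deltaK :: "('c + 'v \<Rightarrow> real) \<Rightarrow> 'c \<Rightarrow> 'v \<Rightarrow> real" where
  "deltaK v K s = v (Inl K) - v (Inr s)"

definition etaKs :: "(real \<Rightarrow> real) \<Rightarrow> ('c + 'v \<Rightarrow> real) \<Rightarrow> 'c \<Rightarrow> 'v \<Rightarrow> real" where
  "etaKs \<eta> u K s = (\<eta> (u (Inl K)) + \<eta> (u (Inr s))) / 2"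

text \<open>x . B_K(u) y with B_K(u) = M_K(u) A_K M_K(u), M_K(u) = diag(sqrt eta_{K,s}(u)).\<close>
definition BK_form ::
  "('c \<Rightarrow> 'v set) \<Rightarrow> ('c \<Rightarrow> 'v \<Rightarrow> 'v \<Rightarrow> real) \<Rightarrow> (real \<Rightarrow> real) \<Rightarrow> ('c + 'v \<Rightarrow> real)
     \<Rightarrow> 'c \<Rightarrow> ('v \<Rightarrow> real) \<Rightarrow> ('v \<Rightarrow> real) \<Rightarrow> real" where
  "BK_form VK a \<eta> u K x y =
     (\<Sum>s\<in>VK K. \<Sum>s'\<in>VK K.
        x s * (sqrt (etaKs \<eta> u K s) * a K s s' * sqrt (etaKs \<eta> u K s')) * y s')"

end

theory Submission
  imports Defs
begin

text \<open>\<open>\<Gamma>\<close> is convex with derivative \<open>p - p 1\<close> on the closure of \<open>Ip p\<close>, so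
  \<open>\<Gamma> b \<ge> \<Gamma> a + (p a - p 1) (b - a)\<close> for \<open>a \<in> Ip p\<close>. At every point the reconstruction
  takes the value of a single degree of freedom \<open>\<nu>\<close> (or vanishes), so the inequality with
  \<open>a = u \<nu>\<close>, \<open>b = uold \<nu>\<close> holds pointwise between the reconstructions of \<open>u\<close> and \<open>uold\<close>;
  integrating it bounds the energy of \<open>uold\<close> from below by that of \<open>u\<close> plus
  \<open>\<integral> (\<pi> uold - \<pi> u) \<pi> (h(u) - p 1)\<close>. Testing the scheme with \<open>v = h(u) - p 1\<close>, whose
  differences \<open>\<delta>\<^sub>K v\<close> are those of \<open>h(u)\<close>, identifies that integral with the dissipation term.\<close>

lemma mono_if_reflected_at_zero:
  fixes p :: "real \<Rightarrow> real"
  assumes incr: "strict_mono_on {0<..} p"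
    and cont: "(p \<longlongrightarrow> p 0) (at_right 0)"
    and refl: "\<And>u. u \<le> 0 \<Longrightarrow> p u = 2 * p 0 - p (- u)"
  shows "mono p"
proof -
  have pos_le: "p x \<le> p y" if "0 < x" "x \<le> y" for x y
    using that strict_mono_onD[OF incr, of x y] by (cases "x = y") auto
  have zero_le: "p 0 \<le> p y" if "0 < y" for y
  proof (rule tendsto_upperbound[OF cont])
    show "\<forall>\<^sub>F x in at_right 0. p x \<le> p y"
      unfolding eventually_at_right_field using that pos_le by (intro exI[of _ y]) auto
  qed simp
  have nonneg_le: "p x \<le> p y" if "0 \<le> x" "x \<le> y" for x y
    using that pos_le zero_le by (cases "x = 0"; cases "y = 0") auto
  show ?thesis
  proof (rule monoI)
    fix x y :: real
    assume "x \<le> y"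
    then consider "0 \<le> x" | "x < 0" "0 \<le> y" | "y < 0" by linarith
    then show "p x \<le> p y"
    proof cases
      case 1 with \<open>x \<le> y\<close> show ?thesis using nonneg_le by blast
    next
      case 2 then show ?thesis using refl[of x] nonneg_le[of 0 "- x"] nonneg_le[of 0 y] by simp
    next
      case 3 then show ?thesis using refl[of x] refl[of y] nonneg_le[of "- y" "- x"] \<open>x \<le> y\<close> by simp
    qed
  qed
qed

lemma set_integrable_Ioo_mono:
  fixes f :: "real \<Rightarrow> real"
  assumes "mono f"
  shows "set_integrable lborel {a<..<b} f"
  unfolding set_integrable_def
proof (rule integrableI_bounded_set[where A="{a<..<b}" and B="max \<bar>f a\<bar> \<bar>f b\<bar>"])
  show "(\<lambda>x. indicator {a<..<b} x *\<^sub>R f x) \<in> borel_measurable lborel"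
    using borel_measurable_mono[OF assms] by measurable
  show "AE x in lborel. x \<in> {a<..<b} \<longrightarrow> norm (indicator {a<..<b} x *\<^sub>R f x) \<le> max \<bar>f a\<bar> \<bar>f b\<bar>"
  proof (intro AE_I2 impI)
    fix x assume x: "x \<in> {a<..<b}"
    then have "f a \<le> f x" "f x \<le> f b" using assms by (auto simp: mono_def)
    then show "norm (indicator {a<..<b} x *\<^sub>R f x) \<le> max \<bar>f a\<bar> \<bar>f b\<bar>" using x by auto
  qed
qed (use emeasure_bounded_finite[of "{a<..<b}"] in \<open>auto simp: less_top\<close>)

lemma interval_lebesgue_integrable_subinterval:
  fixes f :: "real \<Rightarrow> real"
  assumes f: "set_integrable lborel {lo<..<hi} f"
    and "lo \<le> c" "c \<le> hi" "lo \<le> d" "d \<le> hi"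
  shows "interval_lebesgue_integrable lborel (ereal c) (ereal d) f"
proof -
  have "set_integrable lborel {min c d<..<max c d} f"
    by (rule set_integrable_subset[OF f]) (use assms in auto)
  then show ?thesis
    by (cases "c \<le> d") (auto simp: interval_lebesgue_integrable_def max_def min_def)
qed

lemma interval_integral_tangent_le:
  fixes f :: "real \<Rightarrow> real"
  assumes f: "set_integrable lborel {lo<..<hi} f"
    and lo: "lo \<le> min a (min c b)" and hi: "max a (max c b) \<le> hi"
    and above: "\<And>t. a < t \<Longrightarrow> t < b \<Longrightarrow> f a \<le> f t"
    and below: "\<And>t. b < t \<Longrightarrow> t < a \<Longrightarrow> f t \<le> f a"
  shows "(LBINT t=ereal c..ereal a. f t - f c) + (f a - f c) * (b - a)
           \<le> (LBINT t=ereal c..ereal b. f t - f c)"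
proof -
  have int: "interval_lebesgue_integrable lborel (ereal x) (ereal y) (\<lambda>t. f t - k)"
    if "x \<in> {a, b, c}" "y \<in> {a, b, c}" for x y k
    using interval_lebesgue_integrable_subinterval[OF f, of x y] that lo hi
    by (intro interval_lebesgue_integral_diff(1)) auto
  have "(LBINT t=ereal c..ereal b. f t - f c)
        = (LBINT t=ereal c..ereal a. f t - f c) + (LBINT t=ereal a..ereal b. f t - f c)"
    by (rule interval_integral_sum[symmetric]) (use int[of "min c (min a b)" "max c (max a b)"] in
        \<open>auto simp: min_def max_def split: if_splits\<close>)
  also have "(LBINT t=ereal a..ereal b. f t - f c)
      = (LBINT t=ereal a..ereal b. f t - f a) + (f a - f c) * (b - a)"
  proof -
    have "(LBINT t=ereal a..ereal b. f t - f c) = (LBINT t=ereal a..ereal b. (f t - f a) + (f a - f c))"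
      by simp
    also have "\<dots> = (LBINT t=ereal a..ereal b. f t - f a) + (LBINT t=ereal a..ereal b. f a - f c)"
      by (rule interval_lebesgue_integral_add(2)) (use int in auto)
    finally show ?thesis by simp
  qed
  also have "0 \<le> (LBINT t=ereal a..ereal b. f t - f a)"
  proof (cases "a \<le> b")
    case True
    have "0 \<le> integral\<^sup>L lborel (\<lambda>t. indicator {a<..<b} t *\<^sub>R (f t - f a))"
      by (rule integral_nonneg_AE) (auto intro!: AE_I2 above split: split_indicator)
    with True show ?thesis by (simp add: interval_lebesgue_integral_le_eq set_lebesgue_integral_def)
  next
    case False
    have "0 \<le> integral\<^sup>L lborel (\<lambda>t. - (indicator {b<..<a} t *\<^sub>R (f t - f a)))"
      by (rule integral_nonneg_AE) (auto intro!: AE_I2 below split: split_indicator)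
    with False show ?thesis by (simp add: interval_lebesgue_integral_gt_eq set_lebesgue_integral_def)
  qed
  ultimately show ?thesis by linarith
qed

definition Gamma_real :: "(real \<Rightarrow> real) \<Rightarrow> real \<Rightarrow> real" where
  "Gamma_real p u = (LBINT t=ereal 1..ereal u. p t - p 1)"

lemma Gamma_eq_Gamma_real: "u \<in> closure (Ip p) \<Longrightarrow> Gamma p u = ereal (Gamma_real p u)"
  by (simp add: Gamma_def Gamma_real_def)

lemma Gamma_finite_iff: "Gamma p u \<noteq> \<infinity> \<longleftrightarrow> u \<in> closure (Ip p)"
  by (simp add: Gamma_def)

locale pressure =
  fixes p :: "real \<Rightarrow> real"
  assumes p_L1loc: "\<And>b. b > 0 \<Longrightarrow> set_integrable lborel {0..b} p"
    and p_incr: "strict_mono_on {0<..} p"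
    and p_refl: "\<not> p_zero_infinite p \<Longrightarrow>
                   (p \<longlongrightarrow> p 0) (at_right 0) \<and> (\<forall>u\<le>0. p u = 2 * p 0 - p (- u))"
begin

lemma one_in_Ip: "1 \<in> Ip p"
  by (simp add: Ip_def)

lemma zero_in_closure_Ip: "0 \<in> closure (Ip p)"
  by (simp add: Ip_def)

lemma mono_p_if_finite_at_zero: "\<not> p_zero_infinite p \<Longrightarrow> mono p"
  using p_refl mono_if_reflected_at_zero[OF p_incr] by blast

lemma set_integrable_p_Ioo:
  assumes "lo \<in> closure (Ip p)"
  shows "set_integrable lborel {lo<..<hi} p"
proof (cases "p_zero_infinite p")
  case True
  then have "0 \<le> lo" using assms by (simp add: Ip_def)
  show ?thesis
  proof (cases "lo < hi")
    case True
    with \<open>0 \<le> lo\<close> show ?thesis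
      by (intro set_integrable_subset[OF p_L1loc[of hi]]) auto
  qed simp
next
  case False
  then show ?thesis by (intro set_integrable_Ioo_mono mono_p_if_finite_at_zero)
qed

lemma Gamma_real_tangent_le:
  assumes a: "a \<in> Ip p" and b: "b \<in> closure (Ip p)"
  shows "Gamma_real p a + (p a - p 1) * (b - a) \<le> Gamma_real p b"
  unfolding Gamma_real_def
proof (rule interval_integral_tangent_le)
  let ?lo = "min a (min 1 b)"
  have "?lo \<in> closure (Ip p)"
    using a b one_in_Ip closure_subset[of "Ip p"] by (auto simp: min_def)
  then show "set_integrable lborel {?lo<..<max a (max 1 b)} p"
    by (rule set_integrable_p_Ioo)
  have p_le: "p s \<le> p t" if "s < t" "p_zero_infinite p \<Longrightarrow> 0 < s" for s t
  proof (cases "p_zero_infinite p")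
    case True
    then show ?thesis using strict_mono_onD[OF p_incr, of s t] that by auto
  next
    case False
    then show ?thesis using monoD[OF mono_p_if_finite_at_zero, of s t] that by simp
  qed
  show "p a \<le> p t" if "a < t" for t
  proof (rule p_le)
    show "p_zero_infinite p \<Longrightarrow> 0 < a" using a by (simp add: Ip_def)
  qed (rule that)
  show "p t \<le> p a" if "b < t" "t < a" for t
  proof (rule p_le)
    show "p_zero_infinite p \<Longrightarrow> 0 < t" using b that by (simp add: Ip_def)
  qed (rule that)
qed auto

lemma Gamma_real_nonneg: "b \<in> closure (Ip p) \<Longrightarrow> 0 \<le> Gamma_real p b"
  using Gamma_real_tangent_le[OF one_in_Ip] by (simp add: Gamma_real_def)

end

locale lumped_mesh =
  fixes M :: "'c set" and Vs :: "'v set" and VK :: "'c \<Rightarrow> 'v set"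
    and cell :: "'c \<Rightarrow> 'a::euclidean_space set"
    and omK :: "'c \<Rightarrow> 'a set" and omKs :: "'c \<Rightarrow> 'v \<Rightarrow> 'a set"
  assumes M_fin: "finite M" and Vs_fin: "finite Vs"
    and cell_disj: "\<And>K L. K \<in> M \<Longrightarrow> L \<in> M \<Longrightarrow> K \<noteq> L \<Longrightarrow> cell K \<inter> cell L = {}"
    and omK_sub: "\<And>K. K \<in> M \<Longrightarrow> omK K \<subseteq> cell K"
    and omKs_sub: "\<And>K s. K \<in> M \<Longrightarrow> s \<in> VK K \<Longrightarrow> omKs K s \<subseteq> cell K"
    and om_disj1: "\<And>K s. K \<in> M \<Longrightarrow> s \<in> VK K \<Longrightarrow> omK K \<inter> omKs K s = {}"
    and om_disj2: "\<And>K s s'. K \<in> M \<Longrightarrow> s \<in> VK K \<Longrightarrow> s' \<in> VK K \<Longrightarrow> s \<noteq> s'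
                     \<Longrightarrow> omKs K s \<inter> omKs K s' = {}"
    and omK_meas: "\<And>K. K \<in> M \<Longrightarrow> omK K \<in> sets lebesgue"
    and omKs_meas: "\<And>K s. K \<in> M \<Longrightarrow> s \<in> VK K \<Longrightarrow> omKs K s \<in> sets lebesgue"
begin

abbreviation recon :: "('c + 'v \<Rightarrow> real) \<Rightarrow> 'a \<Rightarrow> real" where
  "recon \<equiv> piD M Vs VK omK omKs"

lemma omK_eq_if_mem:
  assumes "K \<in> M" "L \<in> M" "x \<in> omK K" "x \<in> omK L"
  shows "K = L"
  using assms cell_disj[of K L] omK_sub[of K] omK_sub[of L] by blast

lemma mem_omega_s_iff: "x \<in> omega_s M VK omKs s \<longleftrightarrow> (\<exists>K\<in>M. s \<in> VK K \<and> x \<in> omKs K s)"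
  by (auto simp: omega_s_def Ms_def)

lemma omK_disjoint_omega_s:
  assumes "K \<in> M" "x \<in> omK K"
  shows "x \<notin> omega_s M VK omKs s"
proof
  assume "x \<in> omega_s M VK omKs s"
  then obtain L where L: "L \<in> M" "s \<in> VK L" "x \<in> omKs L s"
    unfolding mem_omega_s_iff by blast
  show False
  proof (cases "L = K")
    case True then show False using om_disj1[OF L(1,2)] L(3) assms(2) by blast
  next
    case False
    then show False using cell_disj[OF L(1) assms(1)] omKs_sub[OF L(1,2)] omK_sub[OF assms(1)]
        L(3) assms(2) by blast
  qed
qed

lemma omega_s_eq_if_mem:
  assumes "x \<in> omega_s M VK omKs s" "x \<in> omega_s M VK omKs s'"
  shows "s = s'"
proof -
  obtain K where K: "K \<in> M" "s \<in> VK K" "x \<in> omKs K s"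
    using assms(1) unfolding mem_omega_s_iff by blast
  obtain L where L: "L \<in> M" "s' \<in> VK L" "x \<in> omKs L s'"
    using assms(2) unfolding mem_omega_s_iff by blast
  have "K = L"
    using cell_disj[OF K(1) L(1)] omKs_sub[OF K(1,2)] omKs_sub[OF L(1,2)] K(3) L(3) by blast
  then show ?thesis using om_disj2[OF K(1,2), of s'] L K by blast
qed

lemma recon_on_omK:
  assumes K: "K \<in> M" and x: "x \<in> omK K"
  shows "recon v x = v (Inl K)"
proof -
  have "v (Inl L) * indicator (omK L) x = (if L = K then v (Inl K) else 0)" if "L \<in> M" for L
    using omK_eq_if_mem[OF K that x] x by (cases "L = K") (auto simp: indicator_def)
  then have "(\<Sum>L\<in>M. v (Inl L) * indicator (omK L) x) = v (Inl K)"
    using K M_fin by (simp add: sum.delta cong: sum.cong)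
  moreover have "(\<Sum>s\<in>Vs. v (Inr s) * indicator (omega_s M VK omKs s) x) = 0"
    using omK_disjoint_omega_s[OF K x] by simp
  ultimately show ?thesis by (simp add: piD_def)
qed

lemma recon_on_omega_s:
  assumes s: "s \<in> Vs" and x: "x \<in> omega_s M VK omKs s"
  shows "recon v x = v (Inr s)"
proof -
  have "x \<notin> omK L" if "L \<in> M" for L
    using omK_disjoint_omega_s[OF that] x by blast
  then have "(\<Sum>L\<in>M. v (Inl L) * indicator (omK L) x) = 0"
    by simp
  moreover have "v (Inr s') * indicator (omega_s M VK omKs s') x = (if s' = s then v (Inr s) else 0)"
    for s'
    using omega_s_eq_if_mem[OF x, of s'] x by (cases "s' = s") (auto simp: indicator_def)
  then have "(\<Sum>s'\<in>Vs. v (Inr s') * indicator (omega_s M VK omKs s') x) = v (Inr s)"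
    using s Vs_fin by (simp add: sum.delta cong: sum.cong)
  ultimately show ?thesis by (simp add: piD_def)
qed

lemma recon_cases:
  obtains (outside) "\<And>v. recon v x = 0"
  | (dof) \<nu> where "\<nu> \<in> Inl ` M \<union> Inr ` Vs" "\<And>v. recon v x = v \<nu>"
proof -
  consider (cell) K where "K \<in> M" "x \<in> omK K" | (vertex) s where "s \<in> Vs" "x \<in> omega_s M VK omKs s"
    | (none) "\<forall>K\<in>M. x \<notin> omK K" "\<forall>s\<in>Vs. x \<notin> omega_s M VK omKs s"
    by blast
  then show ?thesis
  proof cases
    case cell then show ?thesis by (intro dof[of "Inl K"] recon_on_omK) auto
  next
    case vertex then show ?thesis by (intro dof[of "Inr s"] recon_on_omega_s) auto
  next
    case none then show ?thesis using outside by (simp add: piD_def)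
  qed
qed

lemma simple_function_recon: "simple_function lebesgue (recon v)"
proof -
  have "omega_s M VK omKs s \<in> sets lebesgue" for s
    unfolding omega_s_def using M_fin by (intro sets.finite_UN) (auto simp: Ms_def omKs_meas)
  then show ?thesis
    unfolding piD_def using omK_meas by (intro simple_function_add simple_function_sum
        simple_function_mult simple_function_const simple_function_indicator) auto
qed

end

lemma set_integrable_simple_function:
  fixes f :: "'a \<Rightarrow> real"
  assumes f: "simple_function M f" and A: "A \<in> fmeasurable M"
  shows "set_integrable M A f"
  unfolding set_integrable_def
proof (rule integrable_simple_function)
  show "simple_function M (\<lambda>x. indicator A x *\<^sub>R f x)"
    using f A by (auto intro: simple_function_mult simple_function_indicator)
  have "emeasure M {x \<in> space M. indicator A x *\<^sub>R f x \<noteq> 0} \<le> emeasure M A"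
    using A by (intro emeasure_mono) (auto split: split_indicator)
  with A show "emeasure M {x \<in> space M. indicator A x *\<^sub>R f x \<noteq> 0} \<noteq> \<infinity>"
    by (auto simp: fmeasurable_def)
qed

lemma energyD_finite_imp_AE_closure_Ip:
  assumes \<Omega>: "\<Omega> \<in> sets lebesgue" and v: "simple_function lebesgue (recon v)"
    and fin: "energyD p \<Omega> recon w v < \<infinity>"
  shows "AE x\<in>\<Omega> in lebesgue. recon v x \<in> closure (Ip p)"
proof -
  let ?g = "\<lambda>x. e2ennreal (Gamma p (recon v x)) * indicator \<Omega> x"
  have "(\<integral>\<^sup>+x. ?g x \<partial>lebesgue) \<noteq> \<infinity>"
    using fin by (auto simp: energyD_def)
  moreover have "?g \<in> borel_measurable lebesgue"
    using simple_function_compose2[where h="\<lambda>a b. e2ennreal (Gamma p a) * b",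
        OF v simple_function_indicator[OF \<Omega>]] by (rule borel_measurable_simple_function)
  ultimately have "AE x in lebesgue. ?g x \<noteq> \<infinity>"
    by (intro nn_integral_PInf_AE)
  then show ?thesis
    by (rule AE_mp) (auto intro!: AE_I2 simp flip: Gamma_finite_iff)
qed

context pressure
begin

lemma energyD_eq_set_integrals:
  assumes \<Omega>: "\<Omega> \<in> lmeasurable" and v: "simple_function lebesgue (recon v)"
    and cl: "AE x\<in>\<Omega> in lebesgue. recon v x \<in> closure (Ip p)"
  shows "energyD p \<Omega> recon w v = ereal ((LINT x:\<Omega>|lebesgue. Gamma_real p (recon v x))
                                        + (LINT x:\<Omega>|lebesgue. recon v x * recon w x))"
proof -
  let ?G = "\<lambda>x. indicator \<Omega> x * Gamma_real p (recon v x)"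
  have int: "integrable lebesgue ?G"
    using set_integrable_simple_function[OF simple_function_compose1[OF v] \<Omega>]
    by (simp add: set_integrable_def)
  have nonneg: "AE x in lebesgue. 0 \<le> ?G x"
    using cl by (rule AE_mp) (auto intro!: AE_I2 Gamma_real_nonneg split: split_indicator)
  have "(\<integral>\<^sup>+x. e2ennreal (Gamma p (recon v x)) * indicator \<Omega> x \<partial>lebesgue)
        = (\<integral>\<^sup>+x. ennreal (?G x) \<partial>lebesgue)"
    using cl by (intro nn_integral_cong_AE, rule AE_mp)
      (auto intro!: AE_I2 simp: Gamma_eq_Gamma_real split: split_indicator)
  also have "\<dots> = ennreal (integral\<^sup>L lebesgue ?G)"
    by (rule nn_integral_eq_integral[OF int nonneg])
  finally show ?thesis
    using integral_nonneg_AE[OF nonneg] by (simp add: energyD_def set_lebesgue_integral_def)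
qed

end

locale lumped_pressure_mesh = pressure p + lumped_mesh M Vs VK cell omK omKs
  for p :: "real \<Rightarrow> real" and M :: "'c set" and Vs :: "'v set" and VK :: "'c \<Rightarrow> 'v set"
    and cell :: "'c \<Rightarrow> 'a::euclidean_space set"
    and omK :: "'c \<Rightarrow> 'a set" and omKs :: "'c \<Rightarrow> 'v \<Rightarrow> 'a set"
begin

lemma recon_in_closure_Ip:
  assumes "\<And>\<nu>. \<nu> \<in> Inl ` M \<union> Inr ` Vs \<Longrightarrow> u \<nu> \<in> Ip p"
  shows "recon u x \<in> closure (Ip p)"
  using assms zero_in_closure_Ip closure_subset by (cases rule: recon_cases[of x]) auto

lemma recon_tangent_le:
  assumes u: "\<And>\<nu>. \<nu> \<in> Inl ` M \<union> Inr ` Vs \<Longrightarrow> u \<nu> \<in> Ip p"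
    and uold: "recon uold x \<in> closure (Ip p)"
  shows "Gamma_real p (recon u x) + recon u x * recon w x
           + (recon uold x - recon u x) * recon (\<lambda>\<nu>. p (u \<nu>) + w \<nu> - p 1) x
         \<le> Gamma_real p (recon uold x) + recon uold x * recon w x"
proof (cases rule: recon_cases[of x])
  case (dof \<nu>)
  with Gamma_real_tangent_le[OF u, of \<nu> "uold \<nu>"] uold show ?thesis
    by (simp add: algebra_simps)
qed simp

lemma energyD_tangent_le:
  assumes \<Omega>: "\<Omega> \<in> lmeasurable"
    and u: "\<And>\<nu>. \<nu> \<in> Inl ` M \<union> Inr ` Vs \<Longrightarrow> u \<nu> \<in> Ip p"
    and uold: "energyD p \<Omega> recon w uold < \<infinity>"
  shows "energyD p \<Omega> recon w u
           + ereal (LINT x:\<Omega>|lebesgue. (recon uold x - recon u x) * recon (\<lambda>\<nu>. p (u \<nu>) + w \<nu> - p 1) x)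
         \<le> energyD p \<Omega> recon w uold"
proof -
  note int = set_integrable_simple_function[OF _ \<Omega>]
  have iG: "set_integrable lebesgue \<Omega> (\<lambda>x. Gamma_real p (recon v x))" for v
    by (rule int[OF simple_function_compose1[OF simple_function_recon]])
  have iW: "set_integrable lebesgue \<Omega> (\<lambda>x. recon v x * recon w x)" for v
    by (rule int[OF simple_function_mult[OF simple_function_recon simple_function_recon]])
  have iD: "set_integrable lebesgue \<Omega>
              (\<lambda>x. (recon uold x - recon u x) * recon (\<lambda>\<nu>. p (u \<nu>) + w \<nu> - p 1) x)"
    by (rule int[OF simple_function_mult[OF simple_function_diff simple_function_recon]])
      (rule simple_function_recon)+
  have uold_cl: "AE x\<in>\<Omega> in lebesgue. recon uold x \<in> closure (Ip p)"
    using \<Omega> uold by (intro energyD_finite_imp_AE_closure_Ip) (auto simp: simple_function_recon)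
  have "AE x\<in>\<Omega> in lebesgue. Gamma_real p (recon u x) + recon u x * recon w x
            + (recon uold x - recon u x) * recon (\<lambda>\<nu>. p (u \<nu>) + w \<nu> - p 1) x
          \<le> Gamma_real p (recon uold x) + recon uold x * recon w x"
    using uold_cl by (rule AE_mp) (auto intro!: AE_I2 recon_tangent_le[of u, OF u])
  then have "(LINT x:\<Omega>|lebesgue. Gamma_real p (recon u x) + recon u x * recon w x
            + (recon uold x - recon u x) * recon (\<lambda>\<nu>. p (u \<nu>) + w \<nu> - p 1) x)
        \<le> (LINT x:\<Omega>|lebesgue. Gamma_real p (recon uold x) + recon uold x * recon w x)"
    by (intro set_integral_mono_AE set_integral_add(1) iG iW iD)
  moreover have "energyD p \<Omega> recon w v = ereal ((LINT x:\<Omega>|lebesgue. Gamma_real p (recon v x))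
                                              + (LINT x:\<Omega>|lebesgue. recon v x * recon w x))"
    if "AE x\<in>\<Omega> in lebesgue. recon v x \<in> closure (Ip p)" for v
    using \<Omega> that by (intro energyD_eq_set_integrals) (auto simp: simple_function_recon)
  moreover have "AE x\<in>\<Omega> in lebesgue. recon u x \<in> closure (Ip p)"
    using recon_in_closure_Ip[of u, OF u] by simp
  ultimately show ?thesis
    using uold_cl set_integral_add(2)[OF iG iW] set_integral_add(2)[OF set_integral_add(1)[OF iG iW] iD]
    by simp
qed

end

text \<open>Of the hypotheses below, only the monotonicity and local integrability of \<open>p\<close>, the
  disjointness and measurability of the lumping regions and the scheme itself are needed; in
  particular nothing about the matrices \<open>A\<^sub>K\<close> is used.\<close>

theorem lemma3p1:
  fixes \<Omega> :: "'a::euclidean_space set"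
    and \<eta> p dp :: "real \<Rightarrow> real"
    and V :: "'a \<Rightarrow> real"
    and M :: "'c set" and Vs :: "'v set"
    and cell :: "'c \<Rightarrow> 'a set" and xK :: "'c \<Rightarrow> 'a"
    and xs :: "'v \<Rightarrow> 'a" and VK :: "'c \<Rightarrow> 'v set"
    and \<alpha> :: "'c \<Rightarrow> 'v \<Rightarrow> real"
    and omK :: "'c \<Rightarrow> 'a set" and omKs :: "'c \<Rightarrow> 'v \<Rightarrow> 'a set"
    and a :: "'c \<Rightarrow> 'v \<Rightarrow> 'v \<Rightarrow> real"
    and dt :: real and u uold :: "'c + 'v \<Rightarrow> real"
  defines "piD' \<equiv> piD M Vs VK omK omKs"
    and "VV \<equiv> (\<lambda>\<nu>. case \<nu> of Inl K \<Rightarrow> V (xK K) | Inr s \<Rightarrow> V (xs s))"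
  assumes dim: "DIM('a) = 2 \<or> DIM('a) = 3"
    and Omega_poly: "polyhedral_open \<Omega>" and Omega_bdd: "bounded \<Omega>"
    and Omega_conn: "connected \<Omega>"
    (* (A1) *)
    and eta_cont: "continuous_on UNIV \<eta>" and eta_0: "\<eta> 0 = 0"
    and eta_pos: "\<And>u. u \<noteq> 0 \<Longrightarrow> \<eta> u > 0"
    and eta_mono: "mono_on {0..} \<eta>" and eta_even: "\<And>u. \<eta> (-u) = \<eta> u"
    (* (A2) *)
    and p_L1loc: "\<And>b. b > 0 \<Longrightarrow> set_integrable lborel {0..b} p"
    and p_ac: "\<And>c b. 0 < c \<Longrightarrow> abs_continuous_on {c..b} p"
    and p_incr: "strict_mono_on {0<..} p"
    and p_infty: "filterlim p at_top at_top"
    and p_refl: "\<not> p_zero_infinite p \<Longrightarrow>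
                   (p \<longlongrightarrow> p 0) (at_right 0) \<and> (\<forall>u\<le>0. p u = 2 * p 0 - p (- u))"
    and dp: "AE x in lborel. x > 0 \<longrightarrow> (p has_real_derivative dp x) (at x)"
    and eta_dp_L1loc: "\<And>b. b > 0 \<Longrightarrow> set_integrable lborel {0<..b} (\<lambda>x. sqrt (\<eta> x) * dp x)"
    and eta_p_0: "((\<lambda>x. sqrt (\<eta> x) * p x) \<longlongrightarrow> 0) (at_right 0)"
    (* (A5) *)
    and V_lip: "\<exists>C. C-lipschitz_on UNIV V"
    and M_fin: "finite M" and Vs_fin: "finite Vs"
    and cell_poly: "\<And>K. K \<in> M \<Longrightarrow> polyhedral_open (cell K)"
    and cell_sub: "\<And>K. K \<in> M \<Longrightarrow> cell K \<subseteq> \<Omega>"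
    and cell_disj: "\<And>K L. K \<in> M \<Longrightarrow> L \<in> M \<Longrightarrow> K \<noteq> L \<Longrightarrow> cell K \<inter> cell L = {}"
    and cell_cover: "(\<Union>K\<in>M. closure (cell K)) = closure \<Omega>"
    and cell_star: "\<And>K x. K \<in> M \<Longrightarrow> x \<in> cell K \<Longrightarrow> xK K \<in> cell K \<and> closed_segment (xK K) x \<subseteq> cell K"
    and VK_sub: "\<And>K. K \<in> M \<Longrightarrow> VK K \<subseteq> Vs"
    and VK_vert: "\<And>K s. K \<in> M \<Longrightarrow> s \<in> VK K \<Longrightarrow> xs s \<in> frontier (cell K)"
    and a_sym: "\<And>K s s'. K \<in> M \<Longrightarrow> s \<in> VK K \<Longrightarrow> s' \<in> VK K \<Longrightarrow> a K s s' = a K s' s"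
    and a_psd: "\<And>K x. K \<in> M \<Longrightarrow> (\<Sum>s\<in>VK K. \<Sum>s'\<in>VK K. x s * a K s s' * x s') \<ge> 0"
    and alpha_nonneg: "\<And>K s. K \<in> M \<Longrightarrow> s \<in> VK K \<Longrightarrow> \<alpha> K s \<ge> 0"
    and alpha_sum: "\<And>K. K \<in> M \<Longrightarrow> (\<Sum>s\<in>VK K. \<alpha> K s) \<le> 1"
    and omK_meas: "\<And>K. K \<in> M \<Longrightarrow> omK K \<in> sets lebesgue"
    and omKs_meas: "\<And>K s. K \<in> M \<Longrightarrow> s \<in> VK K \<Longrightarrow> omKs K s \<in> sets lebesgue"
    and omK_sub: "\<And>K. K \<in> M \<Longrightarrow> omK K \<subseteq> cell K"
    and omKs_sub: "\<And>K s. K \<in> M \<Longrightarrow> s \<in> VK K \<Longrightarrow> omKs K s \<subseteq> cell K"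
    and om_disj1: "\<And>K s. K \<in> M \<Longrightarrow> s \<in> VK K \<Longrightarrow> omK K \<inter> omKs K s = {}"
    and om_disj2: "\<And>K s s'. K \<in> M \<Longrightarrow> s \<in> VK K \<Longrightarrow> s' \<in> VK K \<Longrightarrow> s \<noteq> s'
                     \<Longrightarrow> omKs K s \<inter> omKs K s' = {}"
    and om_cover: "\<And>K. K \<in> M \<Longrightarrow>
                     cell K - (omK K \<union> (\<Union>s\<in>VK K. omKs K s)) \<in> null_sets lebesgue"
    and omKs_measure: "\<And>K s. K \<in> M \<Longrightarrow> s \<in> VK K \<Longrightarrow>
                     measure lebesgue (omKs K s) = \<alpha> K s * measure lebesgue (cell K)"
    and omK_measure: "\<And>K. K \<in> M \<Longrightarrow>
                     measure lebesgue (omK K) = measure lebesgue (cell K) - (\<Sum>s\<in>VK K. \<alpha> K s * measure lebesgue (cell K))"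
    and dt_pos: "dt > 0"
    and uold_en: "energyD p \<Omega> piD' VV uold < \<infinity>"
    and u_ad: "\<And>K. K \<in> M \<Longrightarrow> u (Inl K) \<in> Ip p"
    and u_ad': "\<And>s. s \<in> Vs \<Longrightarrow> u (Inr s) \<in> Ip p"
    and scheme: "\<And>v. set_lebesgue_integral lebesgue \<Omega> (\<lambda>x. piD' u x * piD' v x)
                   + dt * (\<Sum>K\<in>M. BK_form VK a \<eta> u K (deltaK (hvec p VV u) K) (deltaK v K))
                 = set_lebesgue_integral lebesgue \<Omega> (\<lambda>x. piD' uold x * piD' v x)"
  shows "energyD p \<Omega> piD' VV u
           + ereal (dt * (\<Sum>K\<in>M. BK_form VK a \<eta> u K (deltaK (hvec p VV u) K) (deltaK (hvec p VV u) K)))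
         \<le> energyD p \<Omega> piD' VV uold"
proof -
  interpret lumped_pressure_mesh p M Vs VK cell omK omKs
    using p_L1loc p_incr p_refl M_fin Vs_fin cell_disj omK_sub omKs_sub om_disj1 om_disj2
      omK_meas omKs_meas
    by unfold_locales
  have \<Omega>: "\<Omega> \<in> lmeasurable"
    using Omega_poly Omega_bdd by (simp add: polyhedral_open_def lmeasurable_open)
  note int = set_integrable_simple_function[OF _ \<Omega>]
  have "deltaK (\<lambda>\<nu>. hvec p VV u \<nu> - p 1) K = deltaK (hvec p VV u) K" for K
    by (simp add: deltaK_def fun_eq_iff)
  then have "(LINT x:\<Omega>|lebesgue. (piD' uold x - piD' u x) * piD' (\<lambda>\<nu>. hvec p VV u \<nu> - p 1) x)
      = dt * (\<Sum>K\<in>M. BK_form VK a \<eta> u K (deltaK (hvec p VV u) K) (deltaK (hvec p VV u) K))"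
    using scheme[of "\<lambda>\<nu>. hvec p VV u \<nu> - p 1"] int
    by (simp add: left_diff_distrib piD'_def simple_function_recon)
  moreover have "\<And>\<nu>. \<nu> \<in> Inl ` M \<union> Inr ` Vs \<Longrightarrow> u \<nu> \<in> Ip p"
    using u_ad u_ad' by auto
  ultimately show ?thesis
    using energyD_tangent_le[OF \<Omega>, of u VV uold] uold_en by (simp add: piD'_def hvec_def)
qed

end
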